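(* Let $G$ be a non-compact, compactly generated tdlc group and $\Gamma$ a Cayley–Abels graph for $G$ of valency $d$. Let $K\le G$ be the kernel of the action of $G$ on $\Gamma$ and let $L\le\operatorname{Sym}(d)$ be the local action of $G$ on $\Gamma$. If a prime $p$ lies in the local prime content of $G/K$, then $p$ divides the order of the stabilizer in $L$ of some point of $\{1,\dots,d\}$. In particular, the local prime content of $G/K$ is finite.
   Context: A Cayley–Abels graph for a tdlc group $G$ is a locally finite, connected simple graph together with a vertex-transitive action of $G$ by graph automorphisms with compact open vertex stabilizers; its valency $d$ is the number of neighbours of each vertex. The kernel $K$ is the set of elements fixing all vertices. The local action of $G$ is the permutation group $G_\alpha/(G_\alpha\cap G_{\mathbf{N}(\alpha)})\le\operatorname{Sym}(\mathbf{N}(\alpha))$ induced by the vertex stabilizer $G_\alpha$ on the neighbour set $\mathbf{N}(\alpha)$, identified with a subgroup of $\operatorname{Sym}(d)$ via a bijection $\mathbf{N}(\alpha)\to\{1,\dots,d\}$ (well-defined up to conjugacy and independent of $\alpha$). The local prime content of a tdlc group $H$ is the set of primes $p$ such that every compact open subgroup $U\le H$ contains a compact open subgroup $V\le U$ with $p\mid[U:V]$. *)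

theory Defs
  imports "HOL-Analysis.Analysis" "HOL-Algebra.Algebra"
begin

definition topological_group :: "('g, 'b) monoid_scheme \<Rightarrow> 'g topology \<Rightarrow> bool" where
  "topological_group G T \<longleftrightarrow> group G \<and> topspace T = carrier G \<and>
     continuous_map (prod_topology T T) T (\<lambda>(x, y). x \<otimes>\<^bsub>G\<^esub> y) \<and>
     continuous_map T T (\<lambda>x. inv\<^bsub>G\<^esub> x)"

definition tdlc_group :: "('g, 'b) monoid_scheme \<Rightarrow> 'g topology \<Rightarrow> bool" where
  "tdlc_group G T \<longleftrightarrow> topological_group G T \<and> Hausdorff_space T \<and>
     locally_compact_space T \<and>
     (\<forall>x \<in> topspace T. connected_component_of_set T x = {x})"

definition compactly_generated :: "('g, 'b) monoid_scheme \<Rightarrow> 'g topology \<Rightarrow> bool" where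
  "compactly_generated G T \<longleftrightarrow>
     (\<exists>C. C \<subseteq> carrier G \<and> compactin T C \<and> generate G C = carrier G)"

definition compact_open_subgroup :: "('g, 'b) monoid_scheme \<Rightarrow> 'g topology \<Rightarrow> 'g set \<Rightarrow> bool" where
  "compact_open_subgroup G T U \<longleftrightarrow> subgroup U G \<and> compactin T U \<and> openin T U"

definition subgroup_index :: "('g, 'b) monoid_scheme \<Rightarrow> 'g set \<Rightarrow> 'g set \<Rightarrow> nat" where
  "subgroup_index G U V = card {V #>\<^bsub>G\<^esub> u | u. u \<in> U}"

definition local_prime_content :: "('g, 'b) monoid_scheme \<Rightarrow> 'g topology \<Rightarrow> nat set" where
  "local_prime_content G T = {p. Factorial_Ring.prime p \<and>
     (\<forall>U. compact_open_subgroup G T U \<longrightarrow>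
        (\<exists>V. compact_open_subgroup G T V \<and> V \<subseteq> U \<and> p dvd subgroup_index G U V))}"

definition quotient_group_topology :: "('g, 'b) monoid_scheme \<Rightarrow> 'g topology \<Rightarrow> 'g set \<Rightarrow> 'g set topology" where
  "quotient_group_topology G T K =
     topology (\<lambda>\<U>. \<U> \<subseteq> rcosets\<^bsub>G\<^esub> K \<and> openin T (\<Union>\<U>))"

definition neighbours :: "('v \<Rightarrow> 'v \<Rightarrow> bool) \<Rightarrow> 'v set \<Rightarrow> 'v \<Rightarrow> 'v set" where
  "neighbours E V a = {b \<in> V. E a b}"

definition cayley_abels_graph ::
  "('g, 'b) monoid_scheme \<Rightarrow> 'g topology \<Rightarrow> 'v set \<Rightarrow> ('v \<Rightarrow> 'v \<Rightarrow> bool) \<Rightarrow> ('g \<Rightarrow> 'v \<Rightarrow> 'v) \<Rightarrow> bool" where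
  "cayley_abels_graph G T V E \<phi> \<longleftrightarrow>
     \<comment> \<open>simple graph\<close>
     V \<noteq> {} \<and>
     (\<forall>a b. E a b \<longrightarrow> a \<in> V \<and> b \<in> V) \<and>
     (\<forall>a b. E a b \<longrightarrow> E b a) \<and> (\<forall>a. \<not> E a a) \<and>
     \<comment> \<open>locally finite\<close>
     (\<forall>a \<in> V. finite (neighbours E V a)) \<and>
     \<comment> \<open>connected\<close>
     (\<forall>a \<in> V. \<forall>b \<in> V. (\<lambda>x y. E x y)\<^sup>*\<^sup>* a b) \<and>
     \<comment> \<open>action of G by graph automorphisms\<close>
     group_action G V \<phi> \<and>
     (\<forall>g \<in> carrier G. \<forall>a \<in> V. \<forall>b \<in> V. E (\<phi> g a) (\<phi> g b) \<longleftrightarrow> E a b) \<and>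
     \<comment> \<open>vertex transitive\<close>
     (\<forall>a \<in> V. \<forall>b \<in> V. \<exists>g \<in> carrier G. \<phi> g a = b) \<and>
     \<comment> \<open>compact open vertex stabilizers\<close>
     (\<forall>a \<in> V. compactin T (stabilizer G \<phi> a) \<and> openin T (stabilizer G \<phi> a))"

definition valency :: "('v \<Rightarrow> 'v \<Rightarrow> bool) \<Rightarrow> 'v set \<Rightarrow> nat \<Rightarrow> bool" where
  "valency E V d \<longleftrightarrow> (\<forall>a \<in> V. card (neighbours E V a) = d)"

definition action_kernel :: "('g, 'b) monoid_scheme \<Rightarrow> 'v set \<Rightarrow> ('g \<Rightarrow> 'v \<Rightarrow> 'v) \<Rightarrow> 'g set" where
  "action_kernel G V \<phi> = {g \<in> carrier G. \<forall>a \<in> V. \<phi> g a = a}"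

(* local action at vertex a, transported to Sym({1..d}) via a bijection
   bj : N(a) \<rightarrow> {1..d}; permutations are functions nat \<Rightarrow> nat that are the identity
   outside {1..d}. *)
definition local_action ::
  "('g, 'b) monoid_scheme \<Rightarrow> 'v set \<Rightarrow> ('v \<Rightarrow> 'v \<Rightarrow> bool) \<Rightarrow> ('g \<Rightarrow> 'v \<Rightarrow> 'v) \<Rightarrow> 'v \<Rightarrow> nat \<Rightarrow> ('v \<Rightarrow> nat)
     \<Rightarrow> (nat \<Rightarrow> nat) set" where
  "local_action G V E \<phi> a d bj =
     {(\<lambda>i. if i \<in> {1..d} then bj (\<phi> g (inv_into (neighbours E V a) bj i)) else i)
      | g. g \<in> stabilizer G \<phi> a}"

end

theory Submission
  imports Defs
begin

text \<open>Let \<open>H\<close> be the pointwise stabilizer of the ball of radius one around a vertex \<open>a\<close>.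
  Its image in \<open>G/K\<close> is a compact open subgroup, so a prime \<open>p\<close> of the local prime content
  yields an open subgroup \<open>W\<close> with \<open>K \<le> W \<le> H\<close> and \<open>p\<close> dividing \<open>[H : W]\<close>.
  Since \<open>H - W\<close> is compact and every element outside \<open>K\<close> moves some vertex, \<open>W\<close> contains
  the pointwise stabilizer \<open>H\<^sub>A\<close> of the ball around a finite connected vertex set \<open>A\<close>
  containing \<open>a\<close>, so \<open>p\<close> divides \<open>[H : H\<^sub>A]\<close>. Building \<open>A\<close> up from \<open>{a}\<close> one neighbour
  \<open>w\<close> of some \<open>c\<close> at a time, each step multiplies the index by the order of the permutation
  group induced on the neighbourhood of \<open>w\<close> by a subgroup of the stabilizer of the arc
  \<open>(w, c)\<close>. This divides the order of the group induced by the whole arc stabilizer, which by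
  vertex-transitivity is the order of a point stabilizer of the local action \<open>L\<close>. Finiteness
  follows because these finitely many orders are positive.\<close>

section \<open>Indices of subgroups\<close>

lemma card_eq_card_image_mult:
  assumes fibre: "\<And>b. b \<in> f ` A \<Longrightarrow> card {a \<in> A. f a = b} = k"
  shows "card A = card (f ` A) * k"
proof -
  have A_eq: "(\<Union>b\<in>f ` A. {a \<in> A. f a = b}) = A" by auto
  show ?thesis
  proof (cases "finite A")
    case True
    then have "card (\<Union>b\<in>f ` A. {a \<in> A. f a = b}) = (\<Sum>b\<in>f ` A. card {a \<in> A. f a = b})"
      by (intro card_UN_disjoint) auto
    then have "card A = (\<Sum>b\<in>f ` A. card {a \<in> A. f a = b})" unfolding A_eq .
    then show ?thesis using fibre by simp
  next
    case False
    show ?thesis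
    proof (cases "k = 0")
      case False
      have "finite {a \<in> A. f a = b}" if "b \<in> f ` A" for b
        using fibre[OF that] \<open>k \<noteq> 0\<close> card.infinite by metis
      then have "finite (f ` A) \<Longrightarrow> finite (\<Union>b\<in>f ` A. {a \<in> A. f a = b})"
        by (rule finite_UN_I[rotated])
      then have "infinite (f ` A)" using \<open>infinite A\<close> unfolding A_eq by blast
      then show ?thesis using \<open>infinite A\<close> by simp
    qed (use \<open>infinite A\<close> in simp)
  qed
qed

lemma card_image_eq_card_image:
  assumes same_kernel: "\<And>u v. u \<in> A \<Longrightarrow> v \<in> A \<Longrightarrow> f u = f v \<longleftrightarrow> g u = g v"
  shows "card (f ` A) = card (g ` A)"
proof -
  define h where "h y = g (inv_into A f y)" for y
  have h_f: "h (f u) = g u" if "u \<in> A" for u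
    unfolding h_def using that same_kernel by (metis f_inv_into_f image_eqI inv_into_into)
  have "g ` A = h ` f ` A" using h_f by (auto simp: image_image)
  moreover have "inj_on h (f ` A)" using h_f same_kernel by (auto intro!: inj_onI)
  ultimately show ?thesis by (simp add: card_image)
qed

lemma restrict_eq_restrict_iff: "restrict f S = restrict g S \<longleftrightarrow> (\<forall>x\<in>S. f x = g x)"
  by (metis restrict_apply' restrict_ext)

lemma (in group) rcos_eq_iff:
  assumes "subgroup H G" and "x \<in> carrier G" and "y \<in> carrier G"
  shows "H #> x = H #> y \<longleftrightarrow> x \<otimes> inv y \<in> H"
  using assms repr_independence rcos_self subgroup.rcos_module[OF assms(1) is_group]
  by metis

lemma (in group) subgroup_index_conv_image:
  "subgroup_index G I H = card ((\<lambda>u. H #> u) ` I)"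
  unfolding subgroup_index_def by (simp add: setcompr_eq_image)

lemma (in group) subgroup_index_self:
  assumes "subgroup H G"
  shows "subgroup_index G H H = 1"
proof -
  have "(\<lambda>u. H #> u) ` H = {H}"
    using coset_join2[OF _ assms] subgroup.subset[OF assms] subgroup.one_closed[OF assms] by blast
  then show ?thesis by (simp add: subgroup_index_conv_image)
qed

lemma (in group) set_mult_rcos_absorb:
  assumes H: "subgroup H G" and J: "subgroup J G" and "H \<subseteq> J" and u: "u \<in> carrier G"
  shows "J <#> (H #> u) = J #> u"
proof -
  have Jc: "J \<subseteq> carrier G" using J subgroup.subset by blast
  have "J <#> H = J"
  proof
    show "J <#> H \<subseteq> J"
      using mono_set_mult[of J J H J G] \<open>H \<subseteq> J\<close> subgroup_mult_id[OF J] by simp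
    show "J \<subseteq> J <#> H"
      using subgroup.one_closed[OF H] Jc unfolding set_mult_def by force
  qed
  then show ?thesis using setmult_rcos_assoc[OF Jc subgroup.subset[OF H] u] by simp
qed

lemma (in group) rcosets_in_rcos:
  assumes H: "subgroup H G" and J: "subgroup J G" and I: "subgroup I G"
    and "H \<subseteq> J" and "J \<subseteq> I" and v: "v \<in> I"
  shows "{S \<in> (\<lambda>u. H #> u) ` I. J <#> S = J #> v} = (\<lambda>S. S #> v) ` (\<lambda>j. H #> j) ` J"
proof (intro equalityI subsetI)
  have Hc: "H \<subseteq> carrier G" and Jc: "J \<subseteq> carrier G" and Ic: "I \<subseteq> carrier G"
    using H J I subgroup.subset by blast+
  then have vc: "v \<in> carrier G" using v by auto
  {
    fix S
    assume "S \<in> {S \<in> (\<lambda>u. H #> u) ` I. J <#> S = J #> v}"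
    then obtain u where u: "u \<in> I" "S = H #> u" "J #> u = J #> v"
      using set_mult_rcos_absorb[OF H J \<open>H \<subseteq> J\<close>] Ic by auto
    then have "u \<otimes> inv v \<in> J" using rcos_eq_iff[OF J] vc Ic by auto
    moreover have "S = H #> (u \<otimes> inv v) #> v"
      using u vc Ic Hc by (auto simp: coset_mult_assoc m_assoc)
    ultimately show "S \<in> (\<lambda>S. S #> v) ` (\<lambda>j. H #> j) ` J" by blast
  next
    fix S
    assume "S \<in> (\<lambda>S. S #> v) ` (\<lambda>j. H #> j) ` J"
    then obtain j where j: "j \<in> J" "S = H #> j #> v" by auto
    have jc: "j \<in> carrier G" using j Jc by auto
    have "j \<otimes> v \<in> I" using j v \<open>J \<subseteq> I\<close> subgroup.m_closed[OF I] by auto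
    moreover have "S = H #> (j \<otimes> v)" using j jc vc Hc by (simp add: coset_mult_assoc)
    moreover have "J #> (j \<otimes> v) = J #> v"
      using j jc vc Jc coset_join2[OF jc J j(1)] by (simp add: coset_mult_assoc[symmetric])
    ultimately show "S \<in> {S \<in> (\<lambda>u. H #> u) ` I. J <#> S = J #> v}"
      using set_mult_rcos_absorb[OF H J \<open>H \<subseteq> J\<close> m_closed[OF jc vc]] by auto
  }
qed

lemma (in group) subgroup_index_mult:
  assumes H: "subgroup H G" and J: "subgroup J G" and I: "subgroup I G"
    and "H \<subseteq> J" and "J \<subseteq> I"
  shows "subgroup_index G I H = subgroup_index G I J * subgroup_index G J H"
proof -
  have Hc: "H \<subseteq> carrier G" and Jc: "J \<subseteq> carrier G" and Ic: "I \<subseteq> carrier G"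
    using H J I subgroup.subset by blast+
  let ?X = "(\<lambda>u. H #> u) ` I" and ?Y = "(\<lambda>j. H #> j) ` J"
  have image: "(\<lambda>S. J <#> S) ` ?X = (\<lambda>u. J #> u) ` I"
    unfolding image_image using set_mult_rcos_absorb[OF H J \<open>H \<subseteq> J\<close>] Ic
    by (intro image_cong) auto
  have "card {S \<in> ?X. J <#> S = b} = card ?Y" if "b \<in> (\<lambda>S. J <#> S) ` ?X" for b
  proof -
    from that obtain v where v: "v \<in> I" "b = J #> v" unfolding image by blast
    have vc: "v \<in> carrier G" using v Ic by auto
    have "inj_on (\<lambda>S. S #> v) ?Y"
    proof (rule inj_on_inverseI)
      fix S assume "S \<in> ?Y"
      then obtain j where "j \<in> J" "S = H #> j" by blast
      then show "S #> v #> inv v = S"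
        using Hc Jc vc by (simp add: coset_mult_assoc subsetD m_assoc)
    qed
    then show ?thesis
      unfolding v(2) rcosets_in_rcos[OF assms v(1)] by (rule card_image)
  qed
  then have "card ?X = card ((\<lambda>S. J <#> S) ` ?X) * card ?Y"
    by (rule card_eq_card_image_mult)
  then show ?thesis unfolding image subgroup_index_conv_image .
qed

section \<open>Pointwise stabilizers and induced permutation groups\<close>

definition pointwise_stabilizer :: "('g, 'b) monoid_scheme \<Rightarrow> ('g \<Rightarrow> 'v \<Rightarrow> 'v) \<Rightarrow> 'v set \<Rightarrow> 'g set"
  where "pointwise_stabilizer G \<phi> S = {g \<in> carrier G. \<forall>s\<in>S. \<phi> g s = s}"

definition restrictions :: "('g \<Rightarrow> 'v \<Rightarrow> 'v) \<Rightarrow> 'v set \<Rightarrow> 'g set \<Rightarrow> ('v \<Rightarrow> 'v) set"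
  where "restrictions \<phi> S J = (\<lambda>g. restrict (\<phi> g) S) ` J"

sublocale group_action \<subseteq> group G
  using group_hom group_hom.axioms(1) by auto

context group_action
begin

lemma action_closed: "g \<in> carrier G \<Longrightarrow> x \<in> E \<Longrightarrow> \<phi> g x \<in> E"
  using element_image by blast

lemma action_one: "x \<in> E \<Longrightarrow> \<phi> \<one> x = x"
  using id_eq_one by (metis restrict_apply)

lemma action_eq_iff_inv:
  assumes "g \<in> carrier G" "x \<in> E" "y \<in> E"
  shows "\<phi> g x = y \<longleftrightarrow> x = \<phi> (inv g) y"
  using assms orbit_sym_aux[of g x y] orbit_sym_aux[of "inv g" y x] by auto

lemma action_conj:
  assumes "h \<in> carrier G" "g \<in> carrier G" "x \<in> E"
  shows "\<phi> (h \<otimes> g \<otimes> inv h) (\<phi> h x) = \<phi> h (\<phi> g x)"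
  using assms by (simp add: composition_rule action_closed orbit_sym_aux)

lemma pointwise_stabilizer_subgroup:
  assumes "S \<subseteq> E"
  shows "subgroup (pointwise_stabilizer G \<phi> S) G"
proof (rule subgroupI)
  show "pointwise_stabilizer G \<phi> S \<noteq> {}"
    using action_one assms unfolding pointwise_stabilizer_def by auto
  show "inv g \<in> pointwise_stabilizer G \<phi> S" if "g \<in> pointwise_stabilizer G \<phi> S" for g
    using that orbit_sym_aux assms unfolding pointwise_stabilizer_def by force
  show "g \<otimes> h \<in> pointwise_stabilizer G \<phi> S"
    if "g \<in> pointwise_stabilizer G \<phi> S" "h \<in> pointwise_stabilizer G \<phi> S" for g h
    using that composition_rule assms unfolding pointwise_stabilizer_def by force
qed (auto simp: pointwise_stabilizer_def)

text \<open>The orbit--stabilizer theorem for the action of a subgroup on restrictions to a set;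
  the set need not be invariant under the subgroup.\<close>

lemma subgroup_index_pointwise_stabilizer:
  assumes J: "subgroup J G" and S: "S \<subseteq> E"
  shows "subgroup_index G J (J \<inter> pointwise_stabilizer G \<phi> S) = card (restrictions \<phi> S J)"
proof -
  let ?H = "J \<inter> pointwise_stabilizer G \<phi> S"
  have H: "subgroup ?H G"
    using subgroups_Inter_pair[OF J pointwise_stabilizer_subgroup[OF S]] .
  have Jc: "J \<subseteq> carrier G" using J subgroup.subset by blast
  have "?H #> u = ?H #> v \<longleftrightarrow> restrict (\<phi> (inv u)) S = restrict (\<phi> (inv v)) S"
    if u: "u \<in> J" and v: "v \<in> J" for u v
  proof -
    have uc: "u \<in> carrier G" and vc: "v \<in> carrier G" using u v Jc by auto
    have "?H #> u = ?H #> v \<longleftrightarrow> (\<forall>s\<in>S. \<phi> (u \<otimes> inv v) s = s)"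
      using rcos_eq_iff[OF H uc vc] subgroup.m_closed[OF J u subgroup.m_inv_closed[OF J v]]
      unfolding pointwise_stabilizer_def by (auto simp: uc vc)
    also have "\<dots> \<longleftrightarrow> (\<forall>s\<in>S. \<phi> (inv v) s = \<phi> (inv u) s)"
      using S uc vc action_eq_iff_inv[OF uc] action_closed by (simp add: composition_rule subset_iff)
    also have "\<dots> \<longleftrightarrow> restrict (\<phi> (inv u)) S = restrict (\<phi> (inv v)) S"
      by (auto simp: restrict_eq_restrict_iff)
    finally show ?thesis .
  qed
  then have "subgroup_index G J ?H = card ((\<lambda>u. restrict (\<phi> (inv u)) S) ` J)"
    unfolding subgroup_index_conv_image by (rule card_image_eq_card_image)
  also have "(\<lambda>u. restrict (\<phi> (inv u)) S) ` J = restrictions \<phi> S J"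
  proof -
    have "(\<lambda>u. inv u) ` J = J"
    proof
      show "(\<lambda>u. inv u) ` J \<subseteq> J" using subgroup.m_inv_closed[OF J] by blast
      show "J \<subseteq> (\<lambda>u. inv u) ` J"
      proof
        fix x assume x: "x \<in> J"
        then have "x = inv (inv x)" using Jc by auto
        then show "x \<in> (\<lambda>u. inv u) ` J" using subgroup.m_inv_closed[OF J x] by blast
      qed
    qed
    then show ?thesis
      unfolding restrictions_def using image_image[of "\<lambda>g. restrict (\<phi> g) S" "\<lambda>u. inv u" J]
      by simp
  qed
  finally show ?thesis .
qed

lemma subgroup_agreeing_on_invariant_set:
  assumes J: "subgroup J G" and M: "subgroup M G" and "J \<subseteq> M" and S: "S \<subseteq> E"
    and invariant: "\<And>g x. g \<in> M \<Longrightarrow> x \<in> S \<Longrightarrow> \<phi> g x \<in> S"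
  shows "subgroup {g \<in> M. \<exists>j\<in>J. \<forall>x\<in>S. \<phi> g x = \<phi> j x} G"
proof (rule subgroupI)
  let ?N = "{g \<in> M. \<exists>j\<in>J. \<forall>x\<in>S. \<phi> g x = \<phi> j x}"
  have Mc: "M \<subseteq> carrier G" using M subgroup.subset by blast
  show "?N \<subseteq> carrier G" using Mc by auto
  show "?N \<noteq> {}" using subgroup.one_closed[OF J] subgroup.one_closed[OF M] by blast
  show "inv g \<in> ?N" if g_N: "g \<in> ?N" for g
  proof -
    obtain j where g: "g \<in> M" and j: "j \<in> J" "\<forall>x\<in>S. \<phi> g x = \<phi> j x" using g_N by auto
    have gc: "g \<in> carrier G" and jc: "j \<in> carrier G" and jM: "inv j \<in> M"
      using g j \<open>J \<subseteq> M\<close> Mc subgroup.m_inv_closed[OF M] by auto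
    have "\<phi> (inv g) x = \<phi> (inv j) x" if x: "x \<in> S" for x
    proof -
      have "\<phi> (inv j) x \<in> S" using invariant[OF jM x] .
      then have "\<phi> g (\<phi> (inv j) x) = x"
        using j x S jc by (simp add: orbit_sym_aux action_eq_iff_inv subset_iff)
      then show ?thesis
        using gc x S \<open>\<phi> (inv j) x \<in> S\<close> action_eq_iff_inv by (simp add: subset_iff)
    qed
    then show ?thesis
      using subgroup.m_inv_closed[OF M g] subgroup.m_inv_closed[OF J j(1)] by blast
  qed
  show "g \<otimes> h \<in> ?N" if g_N: "g \<in> ?N" and h_N: "h \<in> ?N" for g h
  proof -
    obtain j k where g: "g \<in> M" "j \<in> J" "\<forall>x\<in>S. \<phi> g x = \<phi> j x"
      and h: "h \<in> M" "k \<in> J" "\<forall>x\<in>S. \<phi> h x = \<phi> k x"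
      using g_N h_N by auto
    have c: "g \<in> carrier G" "h \<in> carrier G" "j \<in> carrier G" "k \<in> carrier G"
      using g h \<open>J \<subseteq> M\<close> Mc by auto
    have "\<phi> (g \<otimes> h) x = \<phi> (j \<otimes> k) x" if x: "x \<in> S" for x
      using g h c x S invariant[OF h(1) x] by (simp add: composition_rule subset_iff)
    then show ?thesis
      using subgroup.m_closed[OF J g(2) h(2)] subgroup.m_closed[OF M g(1) h(1)] by blast
  qed
qed

lemma card_restrictions_dvd:
  assumes J: "subgroup J G" and M: "subgroup M G" and JM: "J \<subseteq> M" and S: "S \<subseteq> E"
    and invariant: "\<And>g x. g \<in> M \<Longrightarrow> x \<in> S \<Longrightarrow> \<phi> g x \<in> S"
  shows "card (restrictions \<phi> S J) dvd card (restrictions \<phi> S M)"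
proof -
  define N where "N = {g \<in> M. \<exists>j\<in>J. \<forall>x\<in>S. \<phi> g x = \<phi> j x}"
  define F where "F = pointwise_stabilizer G \<phi> S"
  have N: "subgroup N G"
    unfolding N_def using subgroup_agreeing_on_invariant_set[OF assms] .
  have MF: "subgroup (M \<inter> F) G"
    unfolding F_def using subgroups_Inter_pair[OF M pointwise_stabilizer_subgroup[OF S]] .
  have "M \<inter> F \<subseteq> N"
    using subgroup.one_closed[OF J] action_one S unfolding N_def F_def pointwise_stabilizer_def
    by (force simp: subset_iff)
  then have NF: "N \<inter> F = M \<inter> F" unfolding N_def by auto
  have "restrictions \<phi> S N = restrictions \<phi> S J"
  proof
    show "restrictions \<phi> S N \<subseteq> restrictions \<phi> S J"
    proof
      fix f assume "f \<in> restrictions \<phi> S N"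
      then obtain g j where "f = restrict (\<phi> g) S" "j \<in> J" "\<forall>x\<in>S. \<phi> g x = \<phi> j x"
        unfolding restrictions_def N_def by blast
      then have "f = restrict (\<phi> j) S" "j \<in> J" by (simp_all add: restrict_eq_restrict_iff)
      then show "f \<in> restrictions \<phi> S J" unfolding restrictions_def by blast
    qed
    show "restrictions \<phi> S J \<subseteq> restrictions \<phi> S N"
      unfolding restrictions_def N_def using JM by blast
  qed
  then have "subgroup_index G N (M \<inter> F) = card (restrictions \<phi> S J)"
    using subgroup_index_pointwise_stabilizer[OF N S] NF unfolding F_def by simp
  moreover have "subgroup_index G M (M \<inter> F) = card (restrictions \<phi> S M)"
    using subgroup_index_pointwise_stabilizer[OF M S] unfolding F_def .
  moreover have "subgroup_index G M (M \<inter> F) = subgroup_index G M N * subgroup_index G N (M \<inter> F)"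
    using subgroup_index_mult[OF MF N M \<open>M \<inter> F \<subseteq> N\<close>] unfolding N_def by auto
  ultimately show ?thesis by (metis dvd_triv_right)
qed

lemma card_restrictions_conjugate:
  assumes h: "h \<in> carrier G" and S: "S \<subseteq> E" and M: "M \<subseteq> carrier G"
  shows "card (restrictions \<phi> (\<phi> h ` S) ((\<lambda>m. h \<otimes> m \<otimes> inv h) ` M)) = card (restrictions \<phi> S M)"
proof -
  have "restrict (\<phi> (h \<otimes> u \<otimes> inv h)) (\<phi> h ` S) = restrict (\<phi> (h \<otimes> v \<otimes> inv h)) (\<phi> h ` S)
      \<longleftrightarrow> restrict (\<phi> u) S = restrict (\<phi> v) S" if "u \<in> M" "v \<in> M" for u v
  proof -
    have "(\<forall>y\<in>\<phi> h ` S. \<phi> (h \<otimes> u \<otimes> inv h) y = \<phi> (h \<otimes> v \<otimes> inv h) y) \<longleftrightarrow>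
          (\<forall>x\<in>S. \<phi> h (\<phi> u x) = \<phi> h (\<phi> v x))"
      using that M S h by (simp add: action_conj subset_iff)
    also have "\<dots> \<longleftrightarrow> (\<forall>x\<in>S. \<phi> u x = \<phi> v x)"
      using that M S h inj_prop[OF h] action_closed by (auto simp: inj_on_eq_iff subset_iff)
    finally show ?thesis by (simp add: restrict_eq_restrict_iff)
  qed
  then have "card ((\<lambda>u. restrict (\<phi> (h \<otimes> u \<otimes> inv h)) (\<phi> h ` S)) ` M)
           = card ((\<lambda>u. restrict (\<phi> u) S) ` M)"
    by (rule card_image_eq_card_image)
  then show ?thesis unfolding restrictions_def image_image .
qed

lemma action_kernel_normal: "action_kernel G E \<phi> \<lhd> G"
proof -
  have K: "action_kernel G E \<phi> = pointwise_stabilizer G \<phi> E"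
    unfolding action_kernel_def pointwise_stabilizer_def ..
  have "x \<otimes> h \<otimes> inv x \<in> pointwise_stabilizer G \<phi> E"
    if x: "x \<in> carrier G" and h: "h \<in> pointwise_stabilizer G \<phi> E" for x h
  proof -
    have hc: "h \<in> carrier G" using h unfolding pointwise_stabilizer_def by auto
    have "\<phi> (x \<otimes> h \<otimes> inv x) (\<phi> x b) = \<phi> x b" if "b \<in> E" for b
      using action_conj[OF x hc that] h that unfolding pointwise_stabilizer_def by simp
    then have "\<phi> (x \<otimes> h \<otimes> inv x) b = b" if "b \<in> E" for b
      using that x action_closed action_eq_iff_inv by (metis inv_closed)
    then show ?thesis unfolding pointwise_stabilizer_def using x hc by simp
  qed
  then show ?thesis
    unfolding K using normal_inv_iff pointwise_stabilizer_subgroup by blast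
qed

end

section \<open>Vertex-transitive actions on graphs\<close>

locale transitive_graph_action = group_action G V \<phi>
  for G :: "('g, 'b) monoid_scheme" (structure) and V :: "'v set" and \<phi> +
  fixes E :: "'v \<Rightarrow> 'v \<Rightarrow> bool"
  assumes edge_vertices: "E x y \<Longrightarrow> x \<in> V \<and> y \<in> V"
    and edge_sym: "E x y \<Longrightarrow> E y x"
    and edge_preserved: "g \<in> carrier G \<Longrightarrow> x \<in> V \<Longrightarrow> y \<in> V \<Longrightarrow> E (\<phi> g x) (\<phi> g y) \<longleftrightarrow> E x y"
    and finite_neighbours: "x \<in> V \<Longrightarrow> finite (neighbours E V x)"
    and connected: "x \<in> V \<Longrightarrow> y \<in> V \<Longrightarrow> E\<^sup>*\<^sup>* x y"
    and vertex_transitive: "x \<in> V \<Longrightarrow> y \<in> V \<Longrightarrow> \<exists>g\<in>carrier G. \<phi> g x = y"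
begin

abbreviation nb :: "'v \<Rightarrow> 'v set" where "nb x \<equiv> neighbours E V x"

definition arc_stabilizer :: "'v \<Rightarrow> 'v \<Rightarrow> 'g set"
  where "arc_stabilizer w c = stabilizer G \<phi> w \<inter> stabilizer G \<phi> c"

definition closed_nbhd :: "'v set \<Rightarrow> 'v set"
  where "closed_nbhd A = A \<union> \<Union> (nb ` A)"

definition nbhd_fixator :: "'v set \<Rightarrow> 'g set"
  where "nbhd_fixator A = pointwise_stabilizer G \<phi> (closed_nbhd A)"

text \<open>The finite connected vertex sets containing \<open>a\<close>, generated so that induction follows the
  order in which their vertices are added.\<close>

inductive grown_from :: "'v \<Rightarrow> 'v set \<Rightarrow> bool" for a
  where
    singleton: "grown_from a {a}"
  | insert_neighbour: "grown_from a A \<Longrightarrow> c \<in> A \<Longrightarrow> w \<in> nb c \<Longrightarrow> grown_from a (insert w A)"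

lemma neighbours_subset: "nb x \<subseteq> V"
  unfolding neighbours_def by auto

lemma image_neighbours:
  assumes g: "g \<in> carrier G" and x: "x \<in> V"
  shows "\<phi> g ` nb x = nb (\<phi> g x)"
proof
  show "\<phi> g ` nb x \<subseteq> nb (\<phi> g x)"
    using g x edge_preserved action_closed unfolding neighbours_def by auto
  show "nb (\<phi> g x) \<subseteq> \<phi> g ` nb x"
  proof
    fix y assume y: "y \<in> nb (\<phi> g x)"
    then have yV: "y \<in> V" unfolding neighbours_def by auto
    define z where "z = \<phi> (inv g) y"
    have zV: "z \<in> V" and yz: "\<phi> g z = y"
      unfolding z_def using g yV action_closed action_eq_iff_inv by auto
    then have "z \<in> nb x" using y edge_preserved[OF g x zV] unfolding neighbours_def by simp
    then show "y \<in> \<phi> g ` nb x" using yz by blast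
  qed
qed

lemma stabilizer_maps_neighbours:
  assumes "g \<in> stabilizer G \<phi> x" and "x \<in> V" and "y \<in> nb x"
  shows "\<phi> g y \<in> nb x"
proof -
  have "g \<in> carrier G" "\<phi> g x = x" using assms(1) unfolding stabilizer_def by auto
  then show ?thesis using image_neighbours[of g x] assms(2,3) by (metis image_eqI)
qed

lemma arc_stabilizer_subgroup: "w \<in> V \<Longrightarrow> c \<in> V \<Longrightarrow> subgroup (arc_stabilizer w c) G"
  unfolding arc_stabilizer_def using subgroups_Inter_pair stabilizer_subgroup by blast

lemma stabilizer_conjugate:
  assumes h: "h \<in> carrier G" and x: "x \<in> V"
  shows "stabilizer G \<phi> (\<phi> h x) = (\<lambda>m. h \<otimes> m \<otimes> inv h) ` stabilizer G \<phi> x"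
proof
  show "(\<lambda>m. h \<otimes> m \<otimes> inv h) ` stabilizer G \<phi> x \<subseteq> stabilizer G \<phi> (\<phi> h x)"
    using h x action_conj unfolding stabilizer_def by auto
  show "stabilizer G \<phi> (\<phi> h x) \<subseteq> (\<lambda>m. h \<otimes> m \<otimes> inv h) ` stabilizer G \<phi> x"
  proof
    fix g assume g: "g \<in> stabilizer G \<phi> (\<phi> h x)"
    define m where "m = inv h \<otimes> g \<otimes> h"
    have gc: "g \<in> carrier G" and mc: "m \<in> carrier G" using g h unfolding stabilizer_def m_def by auto
    have gm: "g = h \<otimes> m \<otimes> inv h"
      using gc h unfolding m_def by (simp add: m_assoc) (simp add: m_assoc[symmetric])
    have "\<phi> h (\<phi> m x) = \<phi> h x"
      using g action_conj[OF h mc x] unfolding stabilizer_def gm by simp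
    then have "\<phi> m x = x"
      using inj_prop[OF h] action_closed[OF mc x] x by (simp add: inj_on_eq_iff)
    then show "g \<in> (\<lambda>m. h \<otimes> m \<otimes> inv h) ` stabilizer G \<phi> x"
      using gm mc unfolding stabilizer_def by blast
  qed
qed

lemma arc_stabilizer_conjugate:
  assumes h: "h \<in> carrier G" and "w \<in> V" "c \<in> V"
  shows "arc_stabilizer (\<phi> h w) (\<phi> h c) = (\<lambda>m. h \<otimes> m \<otimes> inv h) ` arc_stabilizer w c"
proof -
  have "inj_on (\<lambda>m. h \<otimes> m \<otimes> inv h) (carrier G)"
    using h by (intro inj_onI) simp
  then show ?thesis
    unfolding arc_stabilizer_def stabilizer_conjugate[OF h \<open>w \<in> V\<close>] stabilizer_conjugate[OF h \<open>c \<in> V\<close>]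
    by (rule inj_on_image_Int[symmetric]) (auto simp: stabilizer_def)
qed

lemma card_restrictions_arc_stabilizer_transfer:
  assumes a: "a \<in> V" and w: "w \<in> V" and c: "c \<in> nb w"
  obtains c0 where "c0 \<in> nb a"
    and "card (restrictions \<phi> (nb w) (arc_stabilizer w c)) = card (restrictions \<phi> (nb a) (arc_stabilizer a c0))"
proof -
  obtain h where h: "h \<in> carrier G" "\<phi> h a = w" using vertex_transitive[OF a w] by blast
  have nbw: "nb w = \<phi> h ` nb a" using image_neighbours[OF h(1) a] h(2) by simp
  then obtain c0 where c0: "c0 \<in> nb a" "c = \<phi> h c0" using c by auto
  have "arc_stabilizer w c = (\<lambda>m. h \<otimes> m \<otimes> inv h) ` arc_stabilizer a c0"
    using arc_stabilizer_conjugate[OF h(1) a] c0 h(2) neighbours_subset by auto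
  moreover have "arc_stabilizer a c0 \<subseteq> carrier G" unfolding arc_stabilizer_def stabilizer_def by auto
  ultimately show ?thesis
    using that[OF c0(1)] card_restrictions_conjugate[OF h(1) neighbours_subset] nbw by simp
qed

lemma nbhd_fixator_subgroup: "A \<subseteq> V \<Longrightarrow> subgroup (nbhd_fixator A) G"
  unfolding nbhd_fixator_def closed_nbhd_def
  using pointwise_stabilizer_subgroup neighbours_subset by (simp add: UN_least)

lemma nbhd_fixator_antimono: "B \<subseteq> A \<Longrightarrow> nbhd_fixator A \<subseteq> nbhd_fixator B"
  unfolding nbhd_fixator_def closed_nbhd_def pointwise_stabilizer_def by auto

lemma nbhd_fixator_insert_neighbour:
  assumes "c \<in> A" and "w \<in> nb c"
  shows "nbhd_fixator (insert w A) = nbhd_fixator A \<inter> pointwise_stabilizer G \<phi> (nb w)"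
proof -
  have "closed_nbhd (insert w A) = closed_nbhd A \<union> nb w"
    using assms unfolding closed_nbhd_def by auto
  then show ?thesis unfolding nbhd_fixator_def pointwise_stabilizer_def by auto
qed

lemma grown_from_subset: "grown_from a A \<Longrightarrow> a \<in> V \<Longrightarrow> A \<subseteq> V \<and> finite A \<and> a \<in> A"
  by (induction rule: grown_from.induct) (auto simp: neighbours_def)

lemma grown_from_reach:
  assumes "grown_from a A" and "E\<^sup>*\<^sup>* a y"
  obtains A' where "grown_from a A'" and "A \<subseteq> A'" and "y \<in> A'"
  using assms(2) that
proof (induction arbitrary: thesis rule: rtranclp_induct)
  case base
  have "a \<in> A" using assms(1) by (induction rule: grown_from.induct) auto
  then show ?case using base assms(1) by blast
next
  case (step y z)
  then obtain A' where A': "grown_from a A'" "A \<subseteq> A'" "y \<in> A'" by blast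
  have "z \<in> nb y" using step.hyps(2) edge_vertices unfolding neighbours_def by auto
  then show ?case using step.prems grown_from.insert_neighbour[OF A'(1,3)] A'(2) by blast
qed

lemma grown_from_cover:
  assumes a: "a \<in> V" and "finite B" and "B \<subseteq> V"
  obtains A where "grown_from a A" and "B \<subseteq> A"
  using assms(2,3) that
proof (induction arbitrary: thesis rule: finite_induct)
  case empty
  then show ?case using grown_from.singleton by blast
next
  case (insert b B)
  then obtain A where A: "grown_from a A" "B \<subseteq> A" by auto
  obtain A' where "grown_from a A'" "A \<subseteq> A'" "b \<in> A'"
    using grown_from_reach[OF A(1) connected[OF a]] insert.prems(2) by blast
  then show ?case using insert.prems(1) A(2) by blast
qed

lemma subgroup_index_nbhd_fixator_insert_dvd:
  assumes A: "A \<subseteq> V" and c: "c \<in> A" and w: "w \<in> nb c"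
  shows "subgroup_index G (nbhd_fixator A) (nbhd_fixator (insert w A))
           dvd card (restrictions \<phi> (nb w) (arc_stabilizer w c))"
proof -
  have cV: "c \<in> V" and wV: "w \<in> V" using A c w neighbours_subset by auto
  have "subgroup_index G (nbhd_fixator A) (nbhd_fixator (insert w A))
      = card (restrictions \<phi> (nb w) (nbhd_fixator A))"
    using subgroup_index_pointwise_stabilizer[OF nbhd_fixator_subgroup[OF A] neighbours_subset]
    by (simp add: nbhd_fixator_insert_neighbour[OF c w])
  also have "\<dots> dvd card (restrictions \<phi> (nb w) (arc_stabilizer w c))"
  proof (rule card_restrictions_dvd[OF nbhd_fixator_subgroup[OF A] arc_stabilizer_subgroup[OF wV cV]
        _ neighbours_subset])
    have "w \<in> closed_nbhd A" "c \<in> closed_nbhd A" using c w unfolding closed_nbhd_def by auto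
    then show "nbhd_fixator A \<subseteq> arc_stabilizer w c"
      unfolding nbhd_fixator_def pointwise_stabilizer_def arc_stabilizer_def stabilizer_def by auto
    show "\<phi> g x \<in> nb w" if "g \<in> arc_stabilizer w c" "x \<in> nb w" for g x
      using that stabilizer_maps_neighbours wV unfolding arc_stabilizer_def by blast
  qed
  finally show ?thesis .
qed

lemma not_dvd_subgroup_index_nbhd_fixator:
  assumes a: "a \<in> V" and p: "Factorial_Ring.prime (p::nat)"
    and arc: "\<And>w c. w \<in> V \<Longrightarrow> c \<in> nb w \<Longrightarrow> \<not> p dvd card (restrictions \<phi> (nb w) (arc_stabilizer w c))"
    and "grown_from a A"
  shows "\<not> p dvd subgroup_index G (nbhd_fixator {a}) (nbhd_fixator A)"
  using \<open>grown_from a A\<close>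
proof (induction rule: grown_from.induct)
  case singleton
  then show ?case
    using subgroup_index_self[OF nbhd_fixator_subgroup] a p prime_gt_1_nat by fastforce
next
  case (insert_neighbour A c w)
  have A: "A \<subseteq> V" "a \<in> A" using grown_from_subset[OF insert_neighbour.hyps(1) a] by auto
  have wV: "w \<in> V" using insert_neighbour.hyps(3) neighbours_subset by auto
  have "c \<in> nb w"
    using insert_neighbour.hyps(2,3) A edge_sym unfolding neighbours_def by auto
  then have step: "\<not> p dvd subgroup_index G (nbhd_fixator A) (nbhd_fixator (insert w A))"
    using subgroup_index_nbhd_fixator_insert_dvd[OF A(1) insert_neighbour.hyps(2,3)] arc[OF wV]
      dvd_trans by blast
  have "subgroup_index G (nbhd_fixator {a}) (nbhd_fixator (insert w A))
      = subgroup_index G (nbhd_fixator {a}) (nbhd_fixator A)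
        * subgroup_index G (nbhd_fixator A) (nbhd_fixator (insert w A))"
    using A wV a by (intro subgroup_index_mult nbhd_fixator_subgroup nbhd_fixator_antimono) auto
  then show ?case using insert_neighbour.IH step prime_dvd_mult_iff[OF p] by simp
qed

lemma card_local_action_point_stabilizer:
  assumes a: "a \<in> V" and bj: "bij_betw bj (nb a) {1..d}" and c: "c \<in> nb a"
  shows "card {\<sigma> \<in> local_action G V E \<phi> a d bj. \<sigma> (bj c) = bj c}
       = card (restrictions \<phi> (nb a) (arc_stabilizer a c))"
proof -
  define \<sigma> where "\<sigma> g = (\<lambda>i. if i \<in> {1..d} then bj (\<phi> g (inv_into (nb a) bj i)) else i)" for g
  have inj: "inj_on bj (nb a)" using bj bij_betw_def by blast
  have maps: "\<phi> g x \<in> nb a" if "g \<in> stabilizer G \<phi> a" "x \<in> nb a" for g x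
    using that stabilizer_maps_neighbours a by blast
  have \<sigma>_bj: "\<sigma> g (bj x) = bj (\<phi> g x)" if "x \<in> nb a" for g x
    using that bij_betwE[OF bj] inj unfolding \<sigma>_def by auto
  have "{\<tau> \<in> local_action G V E \<phi> a d bj. \<tau> (bj c) = bj c} = \<sigma> ` arc_stabilizer a c"
  proof -
    have "\<sigma> g (bj c) = bj c \<longleftrightarrow> \<phi> g c = c" if "g \<in> stabilizer G \<phi> a" for g
      using \<sigma>_bj c maps[OF that c] inj by (auto simp: inj_on_eq_iff)
    then show ?thesis
      unfolding local_action_def arc_stabilizer_def \<sigma>_def[symmetric]
      by (auto simp: stabilizer_def)
  qed
  moreover have "\<sigma> u = \<sigma> v \<longleftrightarrow> restrict (\<phi> u) (nb a) = restrict (\<phi> v) (nb a)"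
    if "u \<in> arc_stabilizer a c" "v \<in> arc_stabilizer a c" for u v
  proof -
    have uv: "u \<in> stabilizer G \<phi> a" "v \<in> stabilizer G \<phi> a" using that arc_stabilizer_def by auto
    have "\<sigma> u = \<sigma> v \<longleftrightarrow> (\<forall>i\<in>{1..d}. \<sigma> u i = \<sigma> v i)"
      unfolding \<sigma>_def fun_eq_iff by auto
    also have "\<dots> \<longleftrightarrow> (\<forall>x\<in>nb a. \<sigma> u (bj x) = \<sigma> v (bj x))"
      unfolding bij_betw_imp_surj_on[OF bj, symmetric] by simp
    also have "\<dots> \<longleftrightarrow> (\<forall>x\<in>nb a. \<phi> u x = \<phi> v x)"
      using \<sigma>_bj maps[OF uv(1)] maps[OF uv(2)] inj by (auto simp: inj_on_eq_iff)
    finally show ?thesis by (simp add: restrict_eq_restrict_iff)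
  qed
  then have "card (\<sigma> ` arc_stabilizer a c) = card (restrictions \<phi> (nb a) (arc_stabilizer a c))"
    unfolding restrictions_def by (rule card_image_eq_card_image)
  ultimately show ?thesis by simp
qed

end

section \<open>Topological groups and their quotients\<close>

lemma continuous_map_left_mult:
  assumes T: "topological_group G T" and g: "g \<in> carrier G"
  shows "continuous_map T T (\<lambda>x. g \<otimes>\<^bsub>G\<^esub> x)"
proof -
  have ts: "topspace T = carrier G"
    and mult: "continuous_map (prod_topology T T) T (\<lambda>(x, y). x \<otimes>\<^bsub>G\<^esub> y)"
    using T unfolding topological_group_def by auto
  have "continuous_map T (prod_topology T T) (\<lambda>x. (g, x))"
    by (rule continuous_map_pairedI) (simp_all add: ts g)
  from continuous_map_compose[OF this mult] show ?thesis by (simp add: o_def)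
qed

lemma closedin_open_subgroup:
  fixes G :: "('g, 'b) monoid_scheme" (structure)
  assumes T: "topological_group G T" and U: "subgroup U G" and "openin T U"
  shows "closedin T U"
proof -
  interpret group G using T unfolding topological_group_def by auto
  have ts: "topspace T = carrier G" using T unfolding topological_group_def by auto
  have complement: "carrier G - U = (\<Union>g\<in>carrier G - U. {x \<in> topspace T. inv g \<otimes> x \<in> U})"
  proof (intro equalityI subsetI)
    fix x assume "x \<in> carrier G - U"
    then show "x \<in> (\<Union>g\<in>carrier G - U. {x \<in> topspace T. inv g \<otimes> x \<in> U})"
      using ts subgroup.one_closed[OF U] by (auto intro!: bexI[of _ x])
  next
    fix x assume "x \<in> (\<Union>g\<in>carrier G - U. {x \<in> topspace T. inv g \<otimes> x \<in> U})"
    then obtain g where g: "g \<in> carrier G" "g \<notin> U" and x: "x \<in> carrier G" "inv g \<otimes> x \<in> U"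
      using ts by auto
    have "x \<notin> U"
    proof
      assume "x \<in> U"
      then have "(inv g \<otimes> x) \<otimes> inv x \<in> U"
        using x subgroup.m_closed[OF U] subgroup.m_inv_closed[OF U] by blast
      then have "inv g \<in> U" using g x by (simp add: m_assoc)
      then have "inv (inv g) \<in> U" by (rule subgroup.m_inv_closed[OF U])
      then show False using g by simp
    qed
    then show "x \<in> carrier G - U" using x by simp
  qed
  have "openin T {x \<in> topspace T. inv g \<otimes> x \<in> U}" if "g \<in> carrier G" for g
    using openin_continuous_map_preimage[OF continuous_map_left_mult[OF T] \<open>openin T U\<close>] that
    by simp
  then have "openin T (\<Union>g\<in>carrier G - U. {x \<in> topspace T. inv g \<otimes> x \<in> U})"
    by (intro openin_Union) auto
  then have "openin T (carrier G - U)" unfolding complement[symmetric] .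
  then show ?thesis
    unfolding closedin_def using ts subgroup.subset[OF U] by (simp add: double_diff)
qed

lemma (in normal) group_hom_Mod: "group_hom G (G Mod H) (\<lambda>x. H #> x)"
  unfolding group_hom_def group_hom_axioms_def
  using is_group factorgroup_is_group r_coset_hom_Mod by simp

context group
begin

lemma istopology_quotient_group_topology:
  assumes "subgroup K G"
  shows "istopology (\<lambda>\<U>. \<U> \<subseteq> rcosets K \<and> openin T (\<Union>\<U>))"
  unfolding istopology_def
proof (rule conjI; intro allI impI)
  fix \<S>1 \<S>2 assume S1: "\<S>1 \<subseteq> rcosets K \<and> openin T (\<Union>\<S>1)"
    and S2: "\<S>2 \<subseteq> rcosets K \<and> openin T (\<Union>\<S>2)"
  have "\<Union>\<S>1 \<inter> \<Union>\<S>2 \<subseteq> \<Union>(\<S>1 \<inter> \<S>2)"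
  proof
    fix x assume "x \<in> \<Union>\<S>1 \<inter> \<Union>\<S>2"
    then obtain A B where "A \<in> \<S>1" "B \<in> \<S>2" "x \<in> A" "x \<in> B" by auto
    moreover have "A = B"
      using rcos_disjoint[OF assms] S1 S2 calculation unfolding pairwise_def disjnt_def by blast
    ultimately show "x \<in> \<Union>(\<S>1 \<inter> \<S>2)" by auto
  qed
  then have "\<Union>(\<S>1 \<inter> \<S>2) = \<Union>\<S>1 \<inter> \<Union>\<S>2" by auto
  then show "\<S>1 \<inter> \<S>2 \<subseteq> rcosets K \<and> openin T (\<Union>(\<S>1 \<inter> \<S>2))" using S1 S2 by auto
next
  fix \<K> assume "\<forall>\<S>\<in>\<K>. \<S> \<subseteq> rcosets K \<and> openin T (\<Union>\<S>)"
  moreover have "\<Union>(\<Union>\<K>) = \<Union>(Union ` \<K>)" by auto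
  ultimately show "\<Union>\<K> \<subseteq> rcosets K \<and> openin T (\<Union>(\<Union>\<K>))" by auto
qed

lemma openin_quotient_group_topology:
  assumes "subgroup K G"
  shows "openin (quotient_group_topology G T K) \<U> \<longleftrightarrow> \<U> \<subseteq> rcosets K \<and> openin T (\<Union>\<U>)"
  unfolding quotient_group_topology_def
  using topology_inverse'[OF istopology_quotient_group_topology[OF assms]] by simp

lemma mem_Union_rcosets_iff:
  assumes K: "subgroup K G" and "\<U> \<subseteq> rcosets K" and x: "x \<in> carrier G"
  shows "x \<in> \<Union>\<U> \<longleftrightarrow> K #> x \<in> \<U>"
proof
  assume "x \<in> \<Union>\<U>"
  then obtain z where z: "z \<in> carrier G" "K #> z \<in> \<U>" "x \<in> K #> z"
    using assms(2) unfolding RCOSETS_def by auto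
  then show "K #> x \<in> \<U>" using repr_independence[OF z(3,1) K] by simp
next
  assume "K #> x \<in> \<U>"
  then show "x \<in> \<Union>\<U>" using rcos_self[OF x K] by auto
qed

lemma continuous_map_quotient_group:
  assumes T: "topological_group G T" and K: "subgroup K G"
  shows "continuous_map T (quotient_group_topology G T K) (\<lambda>x. K #> x)"
proof -
  have ts: "topspace T = carrier G" using T unfolding topological_group_def by auto
  have "openin (quotient_group_topology G T K) (rcosets K)"
    unfolding openin_quotient_group_topology[OF K]
    using rcosets_part_G[OF K] ts openin_topspace[of T] by simp
  then have "rcosets K \<subseteq> topspace (quotient_group_topology G T K)" by (rule openin_subset)
  then show ?thesis unfolding continuous_map
  proof (intro conjI allI impI)
    show "(\<lambda>x. K #> x) ` topspace T \<subseteq> topspace (quotient_group_topology G T K)"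
      using \<open>rcosets K \<subseteq> _\<close> ts rcosetsI subgroup.subset[OF K] by blast
    fix \<U> assume "openin (quotient_group_topology G T K) \<U>"
    then have U: "\<U> \<subseteq> rcosets K" "openin T (\<Union>\<U>)"
      using openin_quotient_group_topology[OF K] by auto
    have "\<Union>\<U> \<subseteq> carrier G" using U(1) rcosets_part_G[OF K] by blast
    then have "{x \<in> topspace T. K #> x \<in> \<U>} = \<Union>\<U>"
      using mem_Union_rcosets_iff[OF K U(1)] ts by blast
    then show "openin T {x \<in> topspace T. K #> x \<in> \<U>}" using U by simp
  qed
qed

lemma Union_rcosets_image:
  assumes K: "subgroup K G" and H: "subgroup H G" and "K \<subseteq> H"
  shows "\<Union>((\<lambda>x. K #> x) ` H) = H"
proof
  show "\<Union>((\<lambda>x. K #> x) ` H) \<subseteq> H"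
    using subgroup.m_closed[OF H] \<open>K \<subseteq> H\<close> unfolding r_coset_def by blast
  show "H \<subseteq> \<Union>((\<lambda>x. K #> x) ` H)"
    using rcos_self[OF _ K] subgroup.subset[OF H] by blast
qed

lemma compact_open_subgroup_image_Mod:
  assumes T: "topological_group G T" and K: "K \<lhd> G"
    and H: "compact_open_subgroup G T H" and "K \<subseteq> H"
  shows "compact_open_subgroup (G Mod K) (quotient_group_topology G T K) ((\<lambda>x. K #> x) ` H)"
  unfolding compact_open_subgroup_def
proof (intro conjI)
  interpret normal K G by (rule K)
  have Hsub: "subgroup H G" and "compactin T H" "openin T H"
    using H unfolding compact_open_subgroup_def by auto
  show "subgroup ((\<lambda>x. K #> x) ` H) (G Mod K)"
    using group_hom.subgroup_img_is_subgroup[OF group_hom_Mod Hsub] .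
  show "compactin (quotient_group_topology G T K) ((\<lambda>x. K #> x) ` H)"
    using image_compactin[OF \<open>compactin T H\<close> continuous_map_quotient_group[OF T subgroup_axioms]] .
  have "(\<lambda>x. K #> x) ` H \<subseteq> rcosets K"
    using rcosetsI subgroup.subset[OF Hsub] subset by blast
  then show "openin (quotient_group_topology G T K) ((\<lambda>x. K #> x) ` H)"
    unfolding openin_quotient_group_topology[OF subgroup_axioms]
    using Union_rcosets_image[OF subgroup_axioms Hsub \<open>K \<subseteq> H\<close>] \<open>openin T H\<close> by simp
qed

lemma subgroup_Union_Mod:
  assumes K: "K \<lhd> G" and V: "subgroup V (G Mod K)"
  shows "subgroup (\<Union>V) G"
proof -
  interpret normal K G by (rule K)
  have VK: "V \<subseteq> rcosets K" using subgroup.subset[OF V] by (simp add: FactGroup_def)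
  have mem: "x \<in> \<Union>V \<longleftrightarrow> K #> x \<in> V" if "x \<in> carrier G" for x
    using mem_Union_rcosets_iff[OF subgroup_axioms VK that] .
  have Vc: "\<Union>V \<subseteq> carrier G" using VK rcosets_part_G[OF subgroup_axioms] by blast
  show ?thesis
  proof (rule subgroupI)
    have "K \<in> V" using subgroup.one_closed[OF V] by simp
    then show "\<Union>V \<noteq> {}" using subgroup.one_closed[OF subgroup_axioms] by blast
    show "inv x \<in> \<Union>V" if xV: "x \<in> \<Union>V" for x
    proof -
      have x: "x \<in> carrier G" using xV Vc by auto
      have "K #> x \<in> V" using xV mem[OF x] by blast
      then have "inv\<^bsub>G Mod K\<^esub> (K #> x) \<in> V" by (rule subgroup.m_inv_closed[OF V])
      then have "K #> inv x \<in> V" using group_hom.hom_inv[OF group_hom_Mod x] by simp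
      then show ?thesis using mem[OF inv_closed[OF x]] by blast
    qed
    show "x \<otimes> y \<in> \<Union>V" if xV: "x \<in> \<Union>V" and yV: "y \<in> \<Union>V" for x y
    proof -
      have x: "x \<in> carrier G" and y: "y \<in> carrier G" using xV yV Vc by auto
      have "K #> x \<in> V" "K #> y \<in> V" using xV yV mem[OF x] mem[OF y] by blast+
      then have "(K #> x) \<otimes>\<^bsub>G Mod K\<^esub> (K #> y) \<in> V" by (rule subgroup.m_closed[OF V])
      then have "K #> (x \<otimes> y) \<in> V" using group_hom.hom_mult[OF group_hom_Mod x y] by simp
      then show ?thesis using mem[OF monoid.m_closed[OF is_monoid x y]] by blast
    qed
  qed (rule Vc)
qed

lemma subgroup_index_Mod:
  assumes K: "K \<lhd> G" and H: "subgroup H G" and V: "subgroup V (G Mod K)"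
  shows "subgroup_index (G Mod K) ((\<lambda>x. K #> x) ` H) V = subgroup_index G H (\<Union>V)"
proof -
  interpret normal K G by (rule K)
  interpret Q: group "G Mod K" by (rule factorgroup_is_group)
  have VK: "V \<subseteq> rcosets K" using subgroup.subset[OF V] by (simp add: FactGroup_def)
  have Hc: "H \<subseteq> carrier G" using subgroup.subset[OF H] .
  have "V #>\<^bsub>G Mod K\<^esub> (K #> u) = V #>\<^bsub>G Mod K\<^esub> (K #> v) \<longleftrightarrow> \<Union>V #> u = \<Union>V #> v"
    if u: "u \<in> H" and v: "v \<in> H" for u v
  proof -
    have uc: "u \<in> carrier G" and vc: "v \<in> carrier G" using u v Hc by auto
    have "V #>\<^bsub>G Mod K\<^esub> (K #> u) = V #>\<^bsub>G Mod K\<^esub> (K #> v)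
        \<longleftrightarrow> (K #> u) \<otimes>\<^bsub>G Mod K\<^esub> inv\<^bsub>G Mod K\<^esub> (K #> v) \<in> V"
      using Q.rcos_eq_iff[OF V] uc vc group_hom.hom_closed[OF group_hom_Mod] by simp
    also have "(K #> u) \<otimes>\<^bsub>G Mod K\<^esub> inv\<^bsub>G Mod K\<^esub> (K #> v) = K #> (u \<otimes> inv v)"
      using group_hom.hom_mult[OF group_hom_Mod] group_hom.hom_inv[OF group_hom_Mod] uc vc by simp
    also have "K #> (u \<otimes> inv v) \<in> V \<longleftrightarrow> u \<otimes> inv v \<in> \<Union>V"
      using mem_Union_rcosets_iff[OF subgroup_axioms VK] uc vc by simp
    also have "\<dots> \<longleftrightarrow> \<Union>V #> u = \<Union>V #> v"
      using rcos_eq_iff[OF subgroup_Union_Mod[OF K V] uc vc] by simp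
    finally show ?thesis .
  qed
  then have "card ((\<lambda>u. V #>\<^bsub>G Mod K\<^esub> (K #> u)) ` H) = card ((\<lambda>u. \<Union>V #> u) ` H)"
    by (rule card_image_eq_card_image)
  then show ?thesis
    unfolding subgroup_index_conv_image Q.subgroup_index_conv_image image_image .
qed

lemma local_prime_content_Mod_witness:
  assumes T: "topological_group G T" and K: "K \<lhd> G"
    and H: "compact_open_subgroup G T H" and "K \<subseteq> H"
    and p: "p \<in> local_prime_content (G Mod K) (quotient_group_topology G T K)"
  obtains W where "subgroup W G" and "openin T W" and "K \<subseteq> W" and "W \<subseteq> H"
    and "p dvd subgroup_index G H W"
proof -
  interpret normal K G by (rule K)
  let ?U = "(\<lambda>x. K #> x) ` H"
  obtain V where V: "compact_open_subgroup (G Mod K) (quotient_group_topology G T K) V"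
    and "V \<subseteq> ?U" and dvd: "p dvd subgroup_index (G Mod K) ?U V"
    using p compact_open_subgroup_image_Mod[OF T K H \<open>K \<subseteq> H\<close>]
    unfolding local_prime_content_def by blast
  have Vsub: "subgroup V (G Mod K)" and "openin (quotient_group_topology G T K) V"
    using V unfolding compact_open_subgroup_def by auto
  then have "openin T (\<Union>V)" using openin_quotient_group_topology[OF subgroup_axioms] by simp
  moreover have "K \<subseteq> \<Union>V" using subgroup.one_closed[OF Vsub] by auto
  moreover have "\<Union>V \<subseteq> H"
  proof -
    have "subgroup H G" using H unfolding compact_open_subgroup_def by simp
    then have "\<Union>?U = H" using Union_rcosets_image[OF subgroup_axioms] \<open>K \<subseteq> H\<close> by simp
    then show ?thesis using Union_mono[OF \<open>V \<subseteq> ?U\<close>] by simp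
  qed
  moreover have "p dvd subgroup_index G H (\<Union>V)"
    using dvd subgroup_index_Mod[OF K _ Vsub] H unfolding compact_open_subgroup_def by simp
  ultimately show ?thesis by (rule that[OF subgroup_Union_Mod[OF K Vsub]])
qed

end

locale cayley_abels_action = transitive_graph_action G V \<phi> E
  for G :: "('g, 'b) monoid_scheme" (structure) and V :: "'v set" and \<phi> and E +
  fixes T :: "'g topology"
  assumes topological: "topological_group G T"
    and stabilizer_compact_open: "x \<in> V \<Longrightarrow> compact_open_subgroup G T (stabilizer G \<phi> x)"
begin

abbreviation kernel :: "'g set" where "kernel \<equiv> action_kernel G V \<phi>"

lemma nbhd_fixator_compact_open:
  assumes a: "a \<in> V"
  shows "compact_open_subgroup G T (nbhd_fixator {a})"
proof -
  let ?B = "closed_nbhd {a}"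
  have B: "finite ?B" "a \<in> ?B" "?B \<subseteq> V"
    using finite_neighbours[OF a] neighbours_subset a unfolding closed_nbhd_def by auto
  have eq: "nbhd_fixator {a} = \<Inter>(stabilizer G \<phi> ` ?B)"
    using B(2) unfolding nbhd_fixator_def pointwise_stabilizer_def stabilizer_def by auto
  have "openin T (stabilizer G \<phi> x)" "compactin T (stabilizer G \<phi> x)"
    and "closedin T (stabilizer G \<phi> x)" if "x \<in> V" for x
    using stabilizer_compact_open[OF that] closedin_open_subgroup[OF topological]
    unfolding compact_open_subgroup_def by auto
  then have "openin T (nbhd_fixator {a})" "compactin T (nbhd_fixator {a})"
    unfolding eq using B
    by (auto intro!: openin_Inter closed_compactin_Inter[where K = "stabilizer G \<phi> a"])
  then show ?thesis
    unfolding compact_open_subgroup_def using nbhd_fixator_subgroup B(3) a by auto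
qed

lemma kernel_subset_nbhd_fixator: "A \<subseteq> V \<Longrightarrow> kernel \<subseteq> nbhd_fixator A"
  using neighbours_subset
  unfolding action_kernel_def nbhd_fixator_def pointwise_stabilizer_def closed_nbhd_def by blast

text \<open>\<open>nbhd_fixator {a} - W\<close> misses the kernel, so it is covered by the open sets of elements
  moving a vertex; by compactness finitely many vertices suffice.\<close>

lemma obtain_nbhd_fixator_subset:
  assumes a: "a \<in> V" and "openin T W" and "kernel \<subseteq> W"
  obtains A where "grown_from a A" and "nbhd_fixator A \<subseteq> W"
proof -
  let ?H = "nbhd_fixator {a}" and ?moves = "\<lambda>b. topspace T - stabilizer G \<phi> b"
  have H: "compactin T ?H" "closedin T ?H"
    using nbhd_fixator_compact_open[OF a] closedin_open_subgroup[OF topological]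
    unfolding compact_open_subgroup_def by auto
  have "compactin T (?H - W)"
    using closed_compactin[OF H(1) _ closedin_diff[OF H(2) \<open>openin T W\<close>]] by blast
  moreover have "openin T (?moves b)" if "b \<in> V" for b
    using stabilizer_compact_open[OF that] closedin_open_subgroup[OF topological]
    unfolding compact_open_subgroup_def closedin_def by auto
  moreover have "?H - W \<subseteq> \<Union>(?moves ` V)"
  proof
    fix g assume g: "g \<in> ?H - W"
    then have "g \<in> topspace T" using compactin_subset_topspace[OF H(1)] by blast
    moreover have "g \<notin> kernel" using g \<open>kernel \<subseteq> W\<close> by blast
    moreover have "g \<in> carrier G" using g unfolding nbhd_fixator_def pointwise_stabilizer_def by blast
    ultimately obtain b where "b \<in> V" "\<phi> g b \<noteq> b" "g \<in> topspace T"
      unfolding action_kernel_def by blast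
    then show "g \<in> \<Union>(?moves ` V)" unfolding stabilizer_def by blast
  qed
  ultimately obtain \<F> where "finite \<F>" "\<F> \<subseteq> ?moves ` V" "?H - W \<subseteq> \<Union>\<F>"
    unfolding compactin_def by (metis (no_types, lifting) imageE)
  then obtain C where C: "finite C" "C \<subseteq> V" "?H - W \<subseteq> \<Union>(?moves ` C)"
    by (metis finite_subset_image)
  obtain A where A: "grown_from a A" "C \<subseteq> A" using grown_from_cover[OF a C(1,2)] .
  have "nbhd_fixator A \<subseteq> ?H"
    using grown_from_subset[OF A(1) a] by (intro nbhd_fixator_antimono) auto
  moreover have "g \<notin> \<Union>(?moves ` C)" if g: "g \<in> nbhd_fixator A" for g
  proof -
    have "g \<in> stabilizer G \<phi> c" if "c \<in> C" for c
      using g that A(2) unfolding nbhd_fixator_def closed_nbhd_def pointwise_stabilizer_def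
        stabilizer_def by blast
    then show ?thesis by blast
  qed
  ultimately have "nbhd_fixator A \<subseteq> W" using C(3) by (meson DiffI subsetD subsetI)
  then show ?thesis using that A(1) by blast
qed

lemma local_prime_content_dvd_arc_stabilizer:
  assumes p: "p \<in> local_prime_content (G Mod kernel) (quotient_group_topology G T kernel)"
    and a: "a \<in> V"
  obtains w c where "w \<in> V" and "c \<in> nb w"
    and "p dvd card (restrictions \<phi> (nb w) (arc_stabilizer w c))"
proof -
  have "\<exists>w\<in>V. \<exists>c\<in>nb w. p dvd card (restrictions \<phi> (nb w) (arc_stabilizer w c))"
  proof (rule ccontr)
    assume "\<not> ?thesis"
    then have arc: "\<And>w c. w \<in> V \<Longrightarrow> c \<in> nb w \<Longrightarrow>
        \<not> p dvd card (restrictions \<phi> (nb w) (arc_stabilizer w c))"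
      by blast
    have "Factorial_Ring.prime p" using p unfolding local_prime_content_def by simp
    let ?H = "nbhd_fixator {a}"
    have H: "compact_open_subgroup G T ?H" using nbhd_fixator_compact_open[OF a] .
    then have Hsub: "subgroup ?H G" unfolding compact_open_subgroup_def by simp
    obtain W where W: "subgroup W G" "openin T W" "kernel \<subseteq> W" "W \<subseteq> ?H"
      and dvd: "p dvd subgroup_index G ?H W"
      using local_prime_content_Mod_witness[OF topological action_kernel_normal H
          kernel_subset_nbhd_fixator p] a by auto
    obtain A where A: "grown_from a A" and "nbhd_fixator A \<subseteq> W"
      using obtain_nbhd_fixator_subset[OF a W(2,3)] .
    have AV: "A \<subseteq> V" using grown_from_subset[OF A a] by simp
    have "subgroup_index G ?H (nbhd_fixator A)
        = subgroup_index G ?H W * subgroup_index G W (nbhd_fixator A)"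
      using subgroup_index_mult[OF nbhd_fixator_subgroup[OF AV] W(1) Hsub] W(4)
        \<open>nbhd_fixator A \<subseteq> W\<close> by simp
    then show False
      using dvd not_dvd_subgroup_index_nbhd_fixator[OF a \<open>Factorial_Ring.prime p\<close> arc A] by simp
  qed
  then show ?thesis using that by blast
qed

lemma local_prime_content_dvd_local_action:
  assumes p: "p \<in> local_prime_content (G Mod kernel) (quotient_group_topology G T kernel)"
    and a: "a \<in> V" and bj: "bij_betw bj (nb a) {1..d}"
  shows "\<exists>i\<in>{1..d}. p dvd card {\<sigma> \<in> local_action G V E \<phi> a d bj. \<sigma> i = i}"
proof -
  obtain w c where "w \<in> V" "c \<in> nb w" and "p dvd card (restrictions \<phi> (nb w) (arc_stabilizer w c))"
    using local_prime_content_dvd_arc_stabilizer[OF p a] .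
  moreover obtain c0 where "c0 \<in> nb a"
    and "card (restrictions \<phi> (nb w) (arc_stabilizer w c)) = card (restrictions \<phi> (nb a) (arc_stabilizer a c0))"
    using card_restrictions_arc_stabilizer_transfer[OF a \<open>w \<in> V\<close> \<open>c \<in> nb w\<close>] .
  ultimately have "p dvd card {\<sigma> \<in> local_action G V E \<phi> a d bj. \<sigma> (bj c0) = bj c0}"
    using card_local_action_point_stabilizer[OF a bj \<open>c0 \<in> nb a\<close>] by simp
  moreover have "bj c0 \<in> {1..d}" using bij_betwE[OF bj] \<open>c0 \<in> nb a\<close> by blast
  ultimately show ?thesis by blast
qed

lemma card_local_action_point_stabilizer_pos:
  assumes a: "a \<in> V" and bj: "bij_betw bj (nb a) {1..d}" and i: "i \<in> {1..d}"
  shows "0 < card {\<sigma> \<in> local_action G V E \<phi> a d bj. \<sigma> i = i}"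
proof -
  obtain c where c: "c \<in> nb a" "i = bj c"
    using i bij_betw_imp_surj_on[OF bj] by blast
  have "restrictions \<phi> (nb a) (arc_stabilizer a c) \<subseteq> nb a \<rightarrow>\<^sub>E nb a"
    using stabilizer_maps_neighbours[OF _ a]
    unfolding restrictions_def arc_stabilizer_def by (auto simp: restrict_PiE_iff)
  moreover have "finite (nb a \<rightarrow>\<^sub>E nb a)" using finite_neighbours[OF a] by (intro finite_PiE)
  ultimately have "finite (restrictions \<phi> (nb a) (arc_stabilizer a c))" by (rule finite_subset)
  moreover have "\<one> \<in> arc_stabilizer a c"
    using subgroup.one_closed[OF arc_stabilizer_subgroup] a c(1) neighbours_subset by blast
  ultimately show ?thesis
    unfolding c(2) card_local_action_point_stabilizer[OF a bj c(1)] restrictions_def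
    by (auto simp: card_gt_0_iff)
qed

end

lemma cayley_abels_action_of_graph:
  assumes "tdlc_group G T" and graph: "cayley_abels_graph G T V E \<phi>"
  shows "cayley_abels_action G V \<phi> E T"
proof -
  have action: "group_action G V \<phi>" using graph unfolding cayley_abels_graph_def by blast
  have "topological_group G T" using assms(1) unfolding tdlc_group_def by blast
  moreover have "compact_open_subgroup G T (stabilizer G \<phi> x)" if "x \<in> V" for x
    using graph that group_action.stabilizer_subgroup[OF action]
    unfolding cayley_abels_graph_def compact_open_subgroup_def by blast
  moreover have "transitive_graph_action_axioms G V \<phi> E"
    using graph unfolding transitive_graph_action_axioms_def cayley_abels_graph_def by blast
  ultimately show ?thesis
    by (intro cayley_abels_action.intro transitive_graph_action.intro
        cayley_abels_action_axioms.intro action)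
qed

theorem mainTheorem18:
  fixes G :: "('g, 'b) monoid_scheme" and T :: "'g topology"
    and V :: "'v set" and E :: "'v \<Rightarrow> 'v \<Rightarrow> bool" and \<phi> :: "'g \<Rightarrow> 'v \<Rightarrow> 'v"
    and d :: nat and p :: nat
  assumes "tdlc_group G T"
    and "\<not> compactin T (carrier G)"
    and "compactly_generated G T"
    and "cayley_abels_graph G T V E \<phi>"
    and "valency E V d"
  shows "(p \<in> local_prime_content (G Mod (action_kernel G V \<phi>))
              (quotient_group_topology G T (action_kernel G V \<phi>))
          \<longrightarrow> (\<forall>a \<in> V. \<forall>bj. bij_betw bj (neighbours E V a) {1..d} \<longrightarrow>
                (\<exists>i \<in> {1..d}. p dvd card {\<sigma> \<in> local_action G V E \<phi> a d bj. \<sigma> i = i})))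
       \<and> finite (local_prime_content (G Mod (action_kernel G V \<phi>))
              (quotient_group_topology G T (action_kernel G V \<phi>)))"
proof -
  interpret cayley_abels_action G V \<phi> E T
    using cayley_abels_action_of_graph[OF assms(1,4)] .
  let ?L = "local_prime_content (G Mod kernel) (quotient_group_topology G T kernel)"
  obtain a where a: "a \<in> V" using conjunct1[OF assms(4)[unfolded cayley_abels_graph_def]] by blast
  have "card (nb a) = card {1..d}" using assms(5) a unfolding valency_def by simp
  then obtain bj where bj: "bij_betw bj (nb a) {1..d}"
    using finite_same_card_bij[OF finite_neighbours[OF a] finite_atLeastAtMost] by blast
  let ?X = "\<lambda>i. card {\<sigma> \<in> local_action G V E \<phi> a d bj. \<sigma> i = i}"
  have "?L \<subseteq> (\<Union>i\<in>{1..d}. {q. q dvd ?X i})"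
    using local_prime_content_dvd_local_action[OF _ a bj] by blast
  moreover have "finite {q. q dvd ?X i}" if "i \<in> {1..d}" for i
    using card_local_action_point_stabilizer_pos[OF a bj that] by simp
  ultimately have "finite ?L" by (meson finite_UN_I finite_atLeastAtMost finite_subset)
  then show ?thesis using local_prime_content_dvd_local_action by blast
qed

end
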